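(* Let $F$ be a preordered semifield of characteristic zero satisfying $1 \geq 0$, and suppose that $u \in F$ is polynomially universal. Then for all nonzero $x, y \in F$, the following are equivalent: (1) $f(x) \geq f(y)$ for every monotone semiring homomorphism $f : F \to \mathbb{R}_+$. (2) For every rational $\varepsilon > 0$, there is $m \in \mathbb{N}$ such that $x + \sum_{j=0}^m \varepsilon^{j+1} u^j \geq y$. (3) For every $r \in \mathbb{R}_+$ and rational $\varepsilon > 0$, there is a polynomial $p \in \mathbb{Q}_+[X]$ such that $p(r) \leq \varepsilon$ and $x + p(u) \geq y$. (4) For every $r \in \mathbb{R}_+$ and rational $\varepsilon > 0$, there is a polynomial $p \in \mathbb{Q}_+[X]$ such that $p(r) \leq 1 + \varepsilon$ and $p(u)\, x \geq y$.
   Context: A semiring is a set with two commutative monoid structures, addition (neutral element $0$) and multiplication (neutral element $1$), with multiplication distributing over addition; a semiring homomorphism preserves $+$, $\cdot$, $0$, $1$. A semifield is a semiring in which every nonzero element has a multiplicative inverse. It has characteristic zero if the unique homomorphism $\mathbb{N} \to F$ is injective; a semifield of characteristic zero is then a $\mathbb{Q}_+$-algebra, which gives meaning to $\varepsilon^{j+1} u^j$ and $p(u)$ for rational coefficients. A preordered semifield is a semifield with a preorder $\geq$ such that $x \geq y$ implies $x+z \geq y+z$ and $xz \geq yz$ for all $z$. A semiring homomorphism is monotone if it preserves the preorder ($\mathbb{R}_+$ with its usual order). An element $u \geq 1$ is polynomially universal if for every nonzero $x \in F$ there is $p \in \mathbb{N}[X]$ with $p(u)\,x \geq 1$ and $p(u)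 \geq x$. *)

theory Defs
  imports Main "HOL-Computational_Algebra.Polynomial"
begin

text \<open>Semifields are modelled as a type of class comm_semiring_1 (so 0 \<noteq> 1) together
with the explicit assumption that every nonzero element is invertible; the preorder
is the class preorder on the same type.\<close>

definition is_semifield :: "'a::comm_semiring_1 itself \<Rightarrow> bool" where
  "is_semifield _ \<longleftrightarrow> (\<forall>x::'a. x \<noteq> 0 \<longrightarrow> (\<exists>y. x * y = 1))"

definition sf_inv :: "'a::comm_semiring_1 \<Rightarrow> 'a" where
  "sf_inv x = (SOME y. x * y = 1)"

definition char_zero_sr :: "'a::comm_semiring_1 itself \<Rightarrow> bool" where
  "char_zero_sr _ \<longleftrightarrow> inj (of_nat :: nat \<Rightarrow> 'a)"

definition preordered_sr :: "'a::{comm_semiring_1,preorder} itself \<Rightarrow> bool" where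
  "preordered_sr _ \<longleftrightarrow> (\<forall>x y z::'a. y \<le> x \<longrightarrow> y + z \<le> x + z \<and> y * z \<le> x * z)"

text \<open>Action of nonnegative rationals (Q_+-algebra structure): q = a/b acts as a * b^{-1}.\<close>
definition qscale :: "rat \<Rightarrow> 'a::comm_semiring_1 \<Rightarrow> 'a" where
  "qscale q x = of_nat (nat (fst (quotient_of q))) * sf_inv (of_nat (nat (snd (quotient_of q)))) * x"

definition qpoly_eval :: "rat poly \<Rightarrow> 'a::comm_semiring_1 \<Rightarrow> 'a" where
  "qpoly_eval p u = (\<Sum>i\<le>degree p. qscale (coeff p i) (u ^ i))"

definition nonneg_qpoly :: "rat poly \<Rightarrow> bool" where
  "nonneg_qpoly p \<longleftrightarrow> (\<forall>i. coeff p i \<ge> 0)"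

definition npoly_eval :: "nat poly \<Rightarrow> 'a::comm_semiring_1 \<Rightarrow> 'a" where
  "npoly_eval p u = poly (map_poly of_nat p) u"

definition poly_universal :: "'a::{comm_semiring_1,preorder} \<Rightarrow> bool" where
  "poly_universal u \<longleftrightarrow> 1 \<le> u \<and>
     (\<forall>x. x \<noteq> 0 \<longrightarrow> (\<exists>p::nat poly. 1 \<le> npoly_eval p u * x \<and> x \<le> npoly_eval p u))"

definition mono_hom_Rplus :: "('a::{comm_semiring_1,preorder} \<Rightarrow> real) \<Rightarrow> bool" where
  "mono_hom_Rplus f \<longleftrightarrow> (\<forall>x. f x \<ge> 0) \<and> (\<forall>x y. f (x + y) = f x + f y) \<and>
     (\<forall>x y. f (x * y) = f x * f y) \<and> f 0 = 0 \<and> f 1 = 1 \<and> (\<forall>x y. x \<le> y \<longrightarrow> f x \<le> f y)"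

end

theory Submission
  imports Defs
begin

text \<open>
  At a fixed \<open>r \<ge> 0\<close> the polynomials
  \<open>\<Sum>j\<le>m. \<delta>\<^sup>j\<^sup>+\<^sup>1 X\<^sup>j\<close> are bounded by \<open>2 \<delta>\<close> uniformly in \<open>m\<close> once \<open>\<delta> r \<le> 1/2\<close>, which gives (3);
  for (4) one multiplies them by a polynomial \<open>P\<close> with \<open>P(u) x \<ge> 1\<close>, which exists by polynomial
  universality. Applying a monotone homomorphism to (3) or (4) and letting \<open>\<epsilon> \<rightarrow> 0\<close> gives (1).

  For (1) \<open>\<Longrightarrow>\<close> (2), suppose \<open>y \<le> x + \<Sum>j\<le>m. \<epsilon>\<^sup>j\<^sup>+\<^sup>1 u\<^sup>j\<close> fails for all \<open>m\<close>. By Zorn's lemma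
  there is a maximal preorder \<open>M\<close> compatible with \<open>+\<close> and \<open>*\<close>, containing \<open>\<le>\<close>, under which
  \<open>y + w\<close> still lies outside every \<open>x + \<Sum>j\<le>m. \<epsilon>\<^sup>j\<^sup>+\<^sup>1 u\<^sup>j + w\<close>. Maximality makes \<open>M\<close>
  cancellative and total, and polynomial universality bounds every element by a nonnegative
  rational in \<open>M\<close>. Hence \<open>phi a = inf {q \<in> \<rat>\<^sub>+. a \<preceq>\<^sub>M q}\<close> is a monotone homomorphism
  \<open>F \<rightarrow> \<real>\<^sub>+\<close>, and it satisfies \<open>phi x + \<epsilon> \<le> phi y\<close>.
\<close>

section \<open>The action of nonnegative rationals\<close>

definition of_nnrat :: "rat \<Rightarrow> 'a::comm_semiring_1" where
  "of_nnrat q = qscale q 1"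

lemma qscale_eq_of_nnrat_mult: "qscale q x = of_nnrat q * x"
  by (simp add: of_nnrat_def qscale_def)

lemma of_nnrat_0 [simp]: "of_nnrat 0 = 0"
  by (simp add: of_nnrat_def qscale_def)

lemma nonneg_rat_quotient_of:
  assumes "0 \<le> q"
  obtains a b :: nat where "quotient_of q = (int a, int b)" "0 < b" "q = of_nat a / of_nat b"
proof -
  obtain n d where nd: "quotient_of q = (n, d)" by fastforce
  have "0 < d" "q = of_int n / of_int d"
    using quotient_of_denom_pos[OF nd] quotient_of_div[OF nd] by auto
  moreover from this assms have "0 \<le> n"
    by (metis divide_less_0_iff linorder_not_le of_int_0_less_iff of_int_less_0_iff)
  ultimately show ?thesis
    using that[of "nat n" "nat d"] nd by simp
qed

context
  assumes semifield: "is_semifield TYPE('a::comm_semiring_1)"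
    and char_zero: "char_zero_sr TYPE('a)"
begin

lemma sf_mult_inv: "(x::'a) \<noteq> 0 \<Longrightarrow> x * sf_inv x = 1"
  unfolding sf_inv_def by (rule someI_ex) (use semifield in \<open>auto simp: is_semifield_def\<close>)

lemma sf_inv_eqI:
  assumes "(x::'a) * y = 1"
  shows "sf_inv x = y"
proof -
  have "x \<noteq> 0" using assms by auto
  have "sf_inv x = sf_inv x * (x * y)" using assms by simp
  also have "\<dots> = (x * sf_inv x) * y" by (simp only: ac_simps)
  finally show ?thesis using sf_mult_inv[OF \<open>x \<noteq> 0\<close>] by simp
qed

lemma sf_inv_mult:
  assumes "(x::'a) \<noteq> 0" "y \<noteq> 0"
  shows "sf_inv (x * y) = sf_inv x * sf_inv y"
proof (rule sf_inv_eqI)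
  have "x * y * (sf_inv x * sf_inv y) = (x * sf_inv x) * (y * sf_inv y)"
    by (simp only: ac_simps)
  then show "x * y * (sf_inv x * sf_inv y) = 1"
    using assms by (simp add: sf_mult_inv)
qed

lemma sf_of_nat_neq_0: "n \<noteq> 0 \<Longrightarrow> (of_nat n :: 'a) \<noteq> 0"
  using char_zero unfolding char_zero_sr_def inj_def by (metis of_nat_0)

lemma sf_fraction_eq:
  assumes "0 < b" "0 < b'" "a * b' = a' * b"
  shows "(of_nat a * sf_inv (of_nat b) :: 'a) = of_nat a' * sf_inv (of_nat b')"
proof -
  have B: "(of_nat b :: 'a) * sf_inv (of_nat b) = 1" "(of_nat b' :: 'a) * sf_inv (of_nat b') = 1"
    using assms sf_of_nat_neq_0 sf_mult_inv by simp_all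
  have "(of_nat a * sf_inv (of_nat b) :: 'a)
      = of_nat a * sf_inv (of_nat b) * (of_nat b' * sf_inv (of_nat b'))"
    using B(2) by simp
  also have "\<dots> = of_nat (a * b') * sf_inv (of_nat b) * sf_inv (of_nat b')"
    by (simp add: ac_simps)
  also have "\<dots> = of_nat a' * sf_inv (of_nat b') * (of_nat b * sf_inv (of_nat b))"
    unfolding assms(3) by (simp add: ac_simps)
  finally show ?thesis using B(1) by simp
qed

lemma of_nnrat_fraction:
  assumes "0 < b"
  shows "(of_nnrat (of_nat a / of_nat b) :: 'a) = of_nat a * sf_inv (of_nat b)"
proof -
  have "0 \<le> (of_nat a / of_nat b :: rat)" by simp
  then obtain n d :: nat where nd: "quotient_of (of_nat a / of_nat b) = (int n, int d)" "0 < d"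
      "(of_nat a / of_nat b :: rat) = of_nat n / of_nat d"
    by (rule nonneg_rat_quotient_of)
  then have "(of_nat (n * b) :: rat) = of_nat (a * d)"
    using assms by (simp add: frac_eq_eq)
  then have "n * b = a * d"
    by (simp only: of_nat_eq_iff)
  then have "(of_nat n * sf_inv (of_nat d) :: 'a) = of_nat a * sf_inv (of_nat b)"
    using nd(2) assms by (rule sf_fraction_eq[rotated 2])
  then show ?thesis
    unfolding of_nnrat_def qscale_def nd(1) by simp
qed

lemma of_nnrat_of_nat [simp]: "(of_nnrat (of_nat n) :: 'a) = of_nat n"
  using of_nnrat_fraction[of 1 n] sf_inv_eqI[of 1 1] by simp

lemma of_nnrat_1 [simp]: "(of_nnrat 1 :: 'a) = 1"
  using of_nnrat_of_nat[of 1] by simp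

lemma of_nnrat_add:
  assumes "0 \<le> q" "0 \<le> r"
  shows "(of_nnrat (q + r) :: 'a) = of_nnrat q + of_nnrat r"
proof -
  obtain a b c d :: nat where ab: "0 < b" "q = of_nat a / of_nat b"
    and cd: "0 < d" "r = of_nat c / of_nat d"
    using nonneg_rat_quotient_of assms by metis
  have inv: "(of_nat b :: 'a) * sf_inv (of_nat b) = 1" "(of_nat d :: 'a) * sf_inv (of_nat d) = 1"
    using ab cd sf_mult_inv sf_of_nat_neq_0 by simp_all
  have "q + r = of_nat (a * d + c * b) / of_nat (b * d)"
    using ab cd by (simp add: field_simps)
  then have "(of_nnrat (q + r) :: 'a) = of_nat (a * d + c * b) * sf_inv (of_nat (b * d))"
    using ab cd by (simp only: of_nnrat_fraction mult_pos_pos)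
  also have "\<dots> = of_nat (a * d + c * b) * (sf_inv (of_nat b) * sf_inv (of_nat d))"
    using ab cd by (simp add: sf_inv_mult sf_of_nat_neq_0)
  also have "\<dots> = of_nat a * sf_inv (of_nat b) * (of_nat d * sf_inv (of_nat d))
      + of_nat c * sf_inv (of_nat d) * (of_nat b * sf_inv (of_nat b))"
    by (simp add: algebra_simps)
  finally show ?thesis
    using ab cd inv by (simp add: of_nnrat_fraction)
qed

lemma of_nnrat_mult:
  assumes "0 \<le> q" "0 \<le> r"
  shows "(of_nnrat (q * r) :: 'a) = of_nnrat q * of_nnrat r"
proof -
  obtain a b c d :: nat where ab: "0 < b" "q = of_nat a / of_nat b"
    and cd: "0 < d" "r = of_nat c / of_nat d"
    using nonneg_rat_quotient_of assms by metis
  have "q * r = of_nat (a * c) / of_nat (b * d)"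
    using ab cd by simp
  then have "(of_nnrat (q * r) :: 'a) = of_nat (a * c) * sf_inv (of_nat (b * d))"
    using ab cd by (simp only: of_nnrat_fraction mult_pos_pos)
  then show ?thesis
    using ab cd by (simp add: of_nnrat_fraction sf_inv_mult sf_of_nat_neq_0 ac_simps)
qed

lemma of_nnrat_neq_0:
  assumes "0 < q"
  shows "(of_nnrat q :: 'a) \<noteq> 0"
proof -
  have "(1::'a) = of_nnrat (q * inverse q)"
    using assms by simp
  also have "\<dots> = of_nnrat q * of_nnrat (inverse q)"
    by (rule of_nnrat_mult) (use assms in auto)
  finally show ?thesis by auto
qed

lemma of_nnrat_sum:
  "(\<And>i. i \<in> A \<Longrightarrow> 0 \<le> g i) \<Longrightarrow> (of_nnrat (sum g A) :: 'a) = (\<Sum>i\<in>A. of_nnrat (g i))"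
  by (induction A rule: infinite_finite_induct) (simp_all add: of_nnrat_add sum_nonneg)

lemma of_nnrat_power: "0 \<le> q \<Longrightarrow> (of_nnrat (q ^ n) :: 'a) = of_nnrat q ^ n"
  by (induction n) (simp_all add: of_nnrat_mult)

end

definition eps_sum :: "rat \<Rightarrow> 'a::comm_semiring_1 \<Rightarrow> nat \<Rightarrow> 'a" where
  "eps_sum \<epsilon> u m = (\<Sum>j\<le>m. qscale (\<epsilon> ^ (j + 1)) (u ^ j))"

lemma eps_sum_eq_sum: "eps_sum \<epsilon> u m = (\<Sum>j\<le>m. of_nnrat (\<epsilon> ^ (j + 1)) * u ^ j)"
  unfolding eps_sum_def qscale_eq_of_nnrat_mult ..

section \<open>Compatible preorders\<close>

definition compatible_preorder :: "('a::comm_semiring_1 \<times> 'a) set \<Rightarrow> bool" where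
  "compatible_preorder R \<longleftrightarrow> refl R \<and> trans R \<and>
     (\<forall>a b c. (a, b) \<in> R \<longrightarrow> (a + c, b + c) \<in> R \<and> (a * c, b * c) \<in> R)"

lemma compatible_preorderI:
  assumes "\<And>a. (a, a) \<in> R"
    and "\<And>a b c. (a, b) \<in> R \<Longrightarrow> (b, c) \<in> R \<Longrightarrow> (a, c) \<in> R"
    and "\<And>a b c. (a, b) \<in> R \<Longrightarrow> (a + c, b + c) \<in> R"
    and "\<And>a b c. (a, b) \<in> R \<Longrightarrow> (a * c, b * c) \<in> R"
  shows "compatible_preorder R"
  using assms unfolding compatible_preorder_def refl_on_def trans_def by blast

context
  fixes R :: "('a::comm_semiring_1 \<times> 'a) set"
  assumes R: "compatible_preorder R"
begin

lemma compatible_preorder_refl: "(a, a) \<in> R"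
  using R unfolding compatible_preorder_def refl_on_def by blast

lemma compatible_preorder_trans: "(a, b) \<in> R \<Longrightarrow> (b, c) \<in> R \<Longrightarrow> (a, c) \<in> R"
  using R unfolding compatible_preorder_def by (meson transD)

lemma compatible_preorder_add_right: "(a, b) \<in> R \<Longrightarrow> (a + c, b + c) \<in> R"
  using R unfolding compatible_preorder_def by blast

lemma compatible_preorder_mult_right: "(a, b) \<in> R \<Longrightarrow> (a * c, b * c) \<in> R"
  using R unfolding compatible_preorder_def by blast

lemma compatible_preorder_add_left: "(a, b) \<in> R \<Longrightarrow> (c + a, c + b) \<in> R"
  using compatible_preorder_add_right by (simp add: add.commute)

lemma compatible_preorder_mult_left: "(a, b) \<in> R \<Longrightarrow> (c * a, c * b) \<in> R"
  using compatible_preorder_mult_right by (simp add: mult.commute)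

lemma compatible_preorder_add: "(a, b) \<in> R \<Longrightarrow> (c, d) \<in> R \<Longrightarrow> (a + c, b + d) \<in> R"
  by (meson compatible_preorder_add_left compatible_preorder_add_right compatible_preorder_trans)

lemma compatible_preorder_mult: "(a, b) \<in> R \<Longrightarrow> (c, d) \<in> R \<Longrightarrow> (a * c, b * d) \<in> R"
  by (meson compatible_preorder_mult_left compatible_preorder_mult_right compatible_preorder_trans)

lemma compatible_preorder_sum:
  "(\<And>i. i \<in> A \<Longrightarrow> (f i, g i) \<in> R) \<Longrightarrow> (sum f A, sum g A) \<in> R"
  by (induction A rule: infinite_finite_induct)
    (simp_all add: compatible_preorder_refl compatible_preorder_add)

lemma compatible_preorder_power: "(a, b) \<in> R \<Longrightarrow> (a ^ n, b ^ n) \<in> R"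
  by (induction n) (simp_all add: compatible_preorder_refl compatible_preorder_mult)

lemma compatible_preorder_cancel_closure:
  "compatible_preorder {(a, b). \<exists>w. (a + w, b + w) \<in> R}"
proof (rule compatible_preorderI; clarsimp)
  show "\<exists>w. (a + w, a + w) \<in> R" for a
    using compatible_preorder_refl by blast
next
  fix a b c w v
  assume "(a + w, b + w) \<in> R" "(b + v, c + v) \<in> R"
  then have "(a + w + v, b + w + v) \<in> R" "(b + v + w, c + v + w) \<in> R"
    using compatible_preorder_add_right by blast+
  moreover have "b + w + v = b + v + w" "c + v + w = c + (w + v)" "a + w + v = a + (w + v)"
    by (simp_all add: ac_simps)
  ultimately have "(a + (w + v), c + (w + v)) \<in> R"
    using compatible_preorder_trans by metis
  then show "\<exists>w. (a + w, c + w) \<in> R" ..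
next
  fix a b c w
  assume "(a + w, b + w) \<in> R"
  then have "(a + w + c, b + w + c) \<in> R"
    by (rule compatible_preorder_add_right)
  then have "(a + c + w, b + c + w) \<in> R"
    by (simp add: ac_simps)
  then show "\<exists>w. (a + c + w, b + c + w) \<in> R" ..
next
  fix a b c w
  assume "(a + w, b + w) \<in> R"
  then have "((a + w) * c, (b + w) * c) \<in> R"
    by (rule compatible_preorder_mult_right)
  then have "(a * c + w * c, b * c + w * c) \<in> R"
    by (simp add: distrib_right)
  then show "\<exists>w. (a * c + w, b * c + w) \<in> R" ..
qed

text \<open>This relation contains \<open>R\<close> (take \<open>z = 0\<close>) and the pair \<open>(a, b)\<close> (take \<open>z = 1\<close>).\<close>

lemma compatible_preorder_extend:
  "compatible_preorder {(c, d). \<exists>z. (c + b * z, d + a * z) \<in> R}"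
proof (rule compatible_preorderI; clarsimp)
  show "\<exists>z. (c + b * z, c + a * z) \<in> R" for c
    using compatible_preorder_refl[of c] by (intro exI[of _ 0]) simp
next
  fix c d f z v
  assume "(c + b * z, d + a * z) \<in> R" "(d + b * v, f + a * v) \<in> R"
  then have "(c + b * z + b * v, d + a * z + b * v) \<in> R" "(d + b * v + a * z, f + a * v + a * z) \<in> R"
    using compatible_preorder_add_right by blast+
  moreover have "d + a * z + b * v = d + b * v + a * z" "c + b * z + b * v = c + b * (z + v)"
    "f + a * v + a * z = f + a * (z + v)"
    by (simp_all add: algebra_simps)
  ultimately have "(c + b * (z + v), f + a * (z + v)) \<in> R"
    using compatible_preorder_trans by metis
  then show "\<exists>z. (c + b * z, f + a * z) \<in> R" ..
next
  fix c d g z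
  assume "(c + b * z, d + a * z) \<in> R"
  then have "(c + b * z + g, d + a * z + g) \<in> R"
    by (rule compatible_preorder_add_right)
  then have "(c + g + b * z, d + g + a * z) \<in> R"
    by (simp add: ac_simps)
  then show "\<exists>z. (c + g + b * z, d + g + a * z) \<in> R" ..
next
  fix c d g z
  assume "(c + b * z, d + a * z) \<in> R"
  then have "((c + b * z) * g, (d + a * z) * g) \<in> R"
    by (rule compatible_preorder_mult_right)
  then have "(c * g + b * (z * g), d * g + a * (z * g)) \<in> R"
    by (simp add: distrib_right mult.assoc)
  then show "\<exists>z. (c * g + b * z, d * g + a * z) \<in> R" ..
qed

end

lemma compatible_preorder_le:
  "preordered_sr TYPE('a::{comm_semiring_1,preorder}) \<Longrightarrow> compatible_preorder {(a::'a, b). a \<le> b}"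
  unfolding preordered_sr_def by (rule compatible_preorderI) (auto intro: order_trans)

lemma compatible_preorder_chain_Union:
  assumes "C \<noteq> {}" "chain\<^sub>\<subseteq> C" "\<And>R. R \<in> C \<Longrightarrow> compatible_preorder R"
  shows "compatible_preorder (\<Union>C)"
proof (rule compatible_preorderI)
  show "(a, a) \<in> \<Union>C" for a
    using assms(1,3) compatible_preorder_refl by blast
  show "(a, c) \<in> \<Union>C" if ab: "(a, b) \<in> \<Union>C" and bc: "(b, c) \<in> \<Union>C" for a b c
  proof -
    obtain R1 R2 where "R1 \<in> C" "R2 \<in> C" "(a, b) \<in> R1" "(b, c) \<in> R2"
      using ab bc by blast
    with assms(2,3) show ?thesis
      unfolding chain_subset_def by (metis UnionI compatible_preorder_trans subsetD)
  qed
  show "(a + c, b + c) \<in> \<Union>C" "(a * c, b * c) \<in> \<Union>C" if "(a, b) \<in> \<Union>C" for a b c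
    using that assms(3) compatible_preorder_add_right compatible_preorder_mult_right by blast+
qed

context
  fixes R :: "('a::comm_semiring_1 \<times> 'a) set"
  assumes R: "compatible_preorder R" and zero_one: "(0, 1) \<in> R"
begin

lemma compatible_preorder_zero_le: "(0, a) \<in> R"
  using compatible_preorder_mult_right[OF R zero_one, of a] by simp

lemma compatible_preorder_le_add: "(a, a + b) \<in> R"
  using compatible_preorder_add_left[OF R compatible_preorder_zero_le, of a b] by simp

lemma compatible_preorder_sum_subset:
  assumes "finite B" "A \<subseteq> B"
  shows "(sum f A, sum f B) \<in> R"
proof -
  have "sum f B = sum f A + sum f (B - A)"
    using assms by (metis add.commute sum.subset_diff)
  then show ?thesis
    using compatible_preorder_le_add by simp
qed

lemma compatible_preorder_power_le_power:
  assumes "(1, u) \<in> R" "i \<le> d"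
  shows "(u ^ i, u ^ d) \<in> R"
proof -
  have "(u ^ i * 1 ^ (d - i), u ^ i * u ^ (d - i)) \<in> R"
    using compatible_preorder_mult_left[OF R compatible_preorder_power[OF R assms(1)]] .
  then show ?thesis
    using assms(2) by (simp flip: power_add)
qed

lemma compatible_preorder_of_nnrat_mono:
  assumes "is_semifield TYPE('a)" "char_zero_sr TYPE('a)" "0 \<le> q" "q \<le> q'"
  shows "(of_nnrat q :: 'a, of_nnrat q') \<in> R"
proof -
  have "(of_nnrat q' :: 'a) = of_nnrat q + of_nnrat (q' - q)"
    using of_nnrat_add[OF assms(1,2,3), of "q' - q"] assms(4) by simp
  then show ?thesis
    using compatible_preorder_le_add by simp
qed

lemma compatible_preorder_eps_sum_mono: "m \<le> m' \<Longrightarrow> (eps_sum \<epsilon> u m, eps_sum \<epsilon> u m') \<in> R"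
  unfolding eps_sum_def by (rule compatible_preorder_sum_subset) auto

lemma compatible_preorder_eps_sum_add_term:
  assumes "m < D"
  shows "(eps_sum \<epsilon> u m + of_nnrat (\<epsilon> ^ (D + 1)) * u ^ D, eps_sum \<epsilon> u D) \<in> R"
proof -
  have split: "eps_sum \<epsilon> u m + of_nnrat (\<epsilon> ^ (D + 1)) * u ^ D
      = (\<Sum>j\<in>insert D {..m}. of_nnrat (\<epsilon> ^ (j + 1)) * u ^ j)"
    using assms by (simp add: eps_sum_eq_sum add.commute)
  show ?thesis
    unfolding split eps_sum_eq_sum[of _ _ D]
    by (rule compatible_preorder_sum_subset) (use assms in auto)
qed

end

section \<open>Polynomials with nonnegative rational coefficients\<close>

definition eps_poly :: "rat \<Rightarrow> nat \<Rightarrow> rat poly" where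
  "eps_poly \<epsilon> m = (\<Sum>j\<le>m. monom (\<epsilon> ^ (j + 1)) j)"

lemma coeff_eps_poly: "coeff (eps_poly \<epsilon> m) i = (if i \<le> m then \<epsilon> ^ (i + 1) else 0)"
  unfolding eps_poly_def by (simp add: coeff_sum)

lemma degree_eps_poly_le: "degree (eps_poly \<epsilon> m) \<le> m"
  unfolding eps_poly_def by (rule degree_sum_le) (auto intro: order_trans[OF degree_monom_le])

lemma nonneg_qpoly_eps_poly: "0 \<le> \<epsilon> \<Longrightarrow> nonneg_qpoly (eps_poly \<epsilon> m)"
  unfolding nonneg_qpoly_def coeff_eps_poly by simp

lemma poly_eq_sum_upto:
  fixes x :: "'a::comm_semiring_1"
  assumes "degree p \<le> N"
  shows "poly p x = (\<Sum>i\<le>N. coeff p i * x ^ i)"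
  unfolding poly_altdef
  by (rule sum.mono_neutral_left) (use assms in \<open>auto simp: coeff_eq_0\<close>)

lemma qpoly_eval_eq_sum_upto:
  "degree p \<le> N \<Longrightarrow> qpoly_eval p u = (\<Sum>i\<le>N. of_nnrat (coeff p i) * u ^ i)"
  unfolding qpoly_eval_def qscale_eq_of_nnrat_mult
  by (rule sum.mono_neutral_left) (auto simp: coeff_eq_0)

lemma poly_map_poly_eq_sum_upto:
  fixes f :: "'a::zero \<Rightarrow> 'b::comm_semiring_1"
  assumes "degree p \<le> N" "f 0 = 0"
  shows "poly (map_poly f p) x = (\<Sum>i\<le>N. f (coeff p i) * x ^ i)"
proof -
  have "degree (map_poly f p) \<le> N"
    using assms(1) map_poly_degree_leq order_trans by blast
  then show ?thesis
    unfolding poly_eq_sum_upto[OF \<open>degree (map_poly f p) \<le> N\<close>]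
    using assms(2) by (simp add: coeff_map_poly)
qed

lemma qpoly_eval_eps_poly: "qpoly_eval (eps_poly \<epsilon> m) u = eps_sum \<epsilon> u m"
  unfolding qpoly_eval_eq_sum_upto[OF degree_eps_poly_le] coeff_eps_poly eps_sum_def
    qscale_eq_of_nnrat_mult
  by simp

lemma poly_of_rat_eps_poly:
  "poly (map_poly (of_rat :: rat \<Rightarrow> real) (eps_poly \<epsilon> m)) r = (\<Sum>j\<le>m. of_rat \<epsilon> ^ (j + 1) * r ^ j)"
  by (simp add: poly_map_poly_eq_sum_upto[OF degree_eps_poly_le] coeff_eps_poly of_rat_power
      of_rat_mult)

lemma qpoly_eval_conv_map_poly: "qpoly_eval p u = poly (map_poly of_nnrat p) u"
  by (simp add: qpoly_eval_eq_sum_upto[OF order_refl] poly_map_poly_eq_sum_upto[OF order_refl])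

lemma map_poly_of_rat_mult:
  "map_poly (of_rat :: rat \<Rightarrow> real) (p * q) = map_poly of_rat p * map_poly of_rat q"
  by (rule poly_eqI) (simp add: coeff_mult coeff_map_poly of_rat_sum of_rat_mult)

lemma map_poly_of_rat_add:
  "map_poly (of_rat :: rat \<Rightarrow> real) (p + q) = map_poly of_rat p + map_poly of_rat q"
  by (rule poly_eqI) (simp add: coeff_map_poly of_rat_add)

lemma poly_of_rat_nonneg:
  "nonneg_qpoly p \<Longrightarrow> 0 \<le> r \<Longrightarrow> 0 \<le> poly (map_poly (of_rat :: rat \<Rightarrow> real) p) r"
  unfolding nonneg_qpoly_def by (simp add: poly_map_poly_eq_sum_upto[OF order_refl] sum_nonneg)

lemma nonneg_qpoly_mult: "nonneg_qpoly p \<Longrightarrow> nonneg_qpoly q \<Longrightarrow> nonneg_qpoly (p * q)"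
  unfolding nonneg_qpoly_def coeff_mult by (simp add: sum_nonneg)

lemma nonneg_qpoly_add: "nonneg_qpoly p \<Longrightarrow> nonneg_qpoly q \<Longrightarrow> nonneg_qpoly (p + q)"
  unfolding nonneg_qpoly_def by simp

lemma nonneg_qpoly_1: "nonneg_qpoly 1"
  unfolding nonneg_qpoly_def by simp

lemma nonneg_qpoly_of_nat_poly: "nonneg_qpoly (map_poly of_nat p)"
  unfolding nonneg_qpoly_def by (simp add: coeff_map_poly)

context
  assumes semifield: "is_semifield TYPE('a::comm_semiring_1)"
    and char_zero: "char_zero_sr TYPE('a)"
begin

lemma qpoly_eval_mult:
  assumes "nonneg_qpoly p" "nonneg_qpoly q"
  shows "qpoly_eval (p * q) (u::'a) = qpoly_eval p u * qpoly_eval q u"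
proof -
  have "map_poly of_nnrat (p * q) = (map_poly of_nnrat p * map_poly of_nnrat q :: 'a poly)"
    using assms unfolding nonneg_qpoly_def
    by (intro poly_eqI) (simp add: coeff_mult coeff_map_poly of_nnrat_sum[OF semifield char_zero]
        of_nnrat_mult[OF semifield char_zero])
  then show ?thesis
    by (simp add: qpoly_eval_conv_map_poly)
qed

lemma qpoly_eval_add:
  assumes "nonneg_qpoly p" "nonneg_qpoly q"
  shows "qpoly_eval (p + q) (u::'a) = qpoly_eval p u + qpoly_eval q u"
proof -
  have "map_poly of_nnrat (p + q) = (map_poly of_nnrat p + map_poly of_nnrat q :: 'a poly)"
    using assms unfolding nonneg_qpoly_def
    by (intro poly_eqI) (simp add: coeff_map_poly of_nnrat_add[OF semifield char_zero])
  then show ?thesis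
    by (simp add: qpoly_eval_conv_map_poly)
qed

lemma qpoly_eval_1: "qpoly_eval 1 (u::'a) = 1"
  by (simp add: qpoly_eval_conv_map_poly of_nnrat_1[OF semifield char_zero])

lemma qpoly_eval_of_nat_poly: "qpoly_eval (map_poly of_nat p) (u::'a) = npoly_eval p u"
proof -
  have "map_poly of_nnrat (map_poly of_nat p) = (map_poly of_nat p :: 'a poly)"
    by (rule poly_eqI) (simp add: coeff_map_poly of_nnrat_of_nat[OF semifield char_zero])
  then show ?thesis
    by (simp add: qpoly_eval_conv_map_poly npoly_eval_def)
qed

end

lemma geometric_sum_le_2:
  fixes t :: real
  assumes "0 \<le> t" "t \<le> 1/2"
  shows "(\<Sum>j\<le>m. t ^ j) \<le> 2"
proof -
  have "(\<Sum>j\<le>m. t ^ j) \<le> 2 - t ^ m"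
  proof (induction m)
    case (Suc m)
    have "t ^ m * (2 * t - 1) \<le> 0"
      using assms by (simp add: mult_nonneg_nonpos)
    then show ?case
      using Suc by (simp add: algebra_simps)
  qed simp
  also have "\<dots> \<le> 2"
    using assms by simp
  finally show ?thesis .
qed

lemma small_eps_poly:
  fixes r K :: real and \<epsilon> :: rat
  assumes "0 \<le> r" "0 \<le> K" "0 < \<epsilon>"
  obtains \<delta> where "0 < \<delta>" "\<And>m. poly (map_poly of_rat (eps_poly \<delta> m)) r * K \<le> of_rat \<epsilon>"
proof -
  define t where "t = min (1 / (2 * (r + 1))) (of_rat \<epsilon> / (2 * (K + 1)))"
  have "0 < t"
    using assms unfolding t_def by simp
  then obtain \<delta> where \<delta>: "0 < (of_rat \<delta> :: real)" "of_rat \<delta> < t"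
    using of_rat_dense by blast
  have "of_rat \<delta> * r \<le> 1 / (2 * (r + 1)) * (r + 1)"
    using \<delta> assms by (intro mult_mono) (auto simp: t_def)
  also have "\<dots> = 1/2"
    using assms by simp
  finally have small: "of_rat \<delta> * r \<le> 1/2" .
  have "2 * of_rat \<delta> * K \<le> 2 * (of_rat \<epsilon> / (2 * (K + 1))) * (K + 1)"
    using \<delta> assms by (intro mult_mono) (auto simp: t_def)
  also have "\<dots> = of_rat \<epsilon>"
    using assms by (simp add: field_simps)
  finally have \<delta>K: "2 * of_rat \<delta> * K \<le> of_rat \<epsilon>" .
  show ?thesis
  proof (rule that)
    show "0 < \<delta>"
      using \<delta>(1) by simp
    fix m
    have "poly (map_poly of_rat (eps_poly \<delta> m)) r = of_rat \<delta> * (\<Sum>j\<le>m. (of_rat \<delta> * r) ^ j)"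
      unfolding poly_of_rat_eps_poly by (simp add: sum_distrib_left power_mult_distrib mult.assoc)
    also have "\<dots> \<le> of_rat \<delta> * 2"
      using \<delta>(1) small assms(1) by (intro mult_left_mono geometric_sum_le_2) simp_all
    finally have "poly (map_poly of_rat (eps_poly \<delta> m)) r * K \<le> of_rat \<delta> * 2 * K"
      using assms(2) by (rule mult_right_mono)
    then show "poly (map_poly of_rat (eps_poly \<delta> m)) r * K \<le> of_rat \<epsilon>"
      using \<delta>K by (simp add: ac_simps)
  qed
qed

section \<open>Monotone homomorphisms to the nonnegative reals\<close>

context
  fixes f :: "'a::{comm_semiring_1,preorder} \<Rightarrow> real"
  assumes f: "mono_hom_Rplus f"
begin

lemma mono_hom_Rplus_nonneg: "0 \<le> f a"
  using f unfolding mono_hom_Rplus_def by blast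

lemma mono_hom_Rplus_add: "f (a + b) = f a + f b"
  using f unfolding mono_hom_Rplus_def by blast

lemma mono_hom_Rplus_mult: "f (a * b) = f a * f b"
  using f unfolding mono_hom_Rplus_def by blast

lemma mono_hom_Rplus_mono: "a \<le> b \<Longrightarrow> f a \<le> f b"
  using f unfolding mono_hom_Rplus_def by blast

lemma mono_hom_Rplus_of_nat: "f (of_nat n) = of_nat n"
  using f unfolding mono_hom_Rplus_def by (induction n) simp_all

lemma mono_hom_Rplus_sum: "f (sum g A) = (\<Sum>i\<in>A. f (g i))"
  using f unfolding mono_hom_Rplus_def by (induction A rule: infinite_finite_induct) simp_all

lemma mono_hom_Rplus_power: "f (a ^ n) = f a ^ n"
  using f unfolding mono_hom_Rplus_def by (induction n) simp_all

lemma mono_hom_Rplus_of_nnrat: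
  assumes semifield: "is_semifield TYPE('a)" and char_zero: "char_zero_sr TYPE('a)"
    and "0 \<le> q"
  shows "f (of_nnrat q) = of_rat q"
proof -
  obtain a b :: nat where ab: "0 < b" "q = of_nat a / of_nat b"
    using nonneg_rat_quotient_of[OF \<open>0 \<le> q\<close>] by metis
  have "f (of_nat b) * f (sf_inv (of_nat b)) = 1"
    using f ab(1) sf_mult_inv[OF semifield char_zero] sf_of_nat_neq_0[OF semifield char_zero]
    unfolding mono_hom_Rplus_def by (metis less_irrefl)
  then have "f (sf_inv (of_nat b)) = 1 / of_nat b"
    using ab(1) by (simp add: mono_hom_Rplus_of_nat field_simps)
  then show ?thesis
    using ab by (simp add: of_nnrat_fraction[OF semifield char_zero] mono_hom_Rplus_mult
        mono_hom_Rplus_of_nat of_rat_divide)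
qed

lemma mono_hom_Rplus_qpoly_eval:
  assumes "is_semifield TYPE('a)" "char_zero_sr TYPE('a)" "nonneg_qpoly p"
  shows "f (qpoly_eval p u) = poly (map_poly of_rat p) (f u)"
  using assms unfolding qpoly_eval_eq_sum_upto[OF order_refl] nonneg_qpoly_def
  by (simp add: poly_map_poly_eq_sum_upto[OF order_refl] mono_hom_Rplus_sum mono_hom_Rplus_mult
      mono_hom_Rplus_power mono_hom_Rplus_of_nnrat)

end

section \<open>The domination conditions\<close>

definition hom_dominates :: "'a::{comm_semiring_1,preorder} \<Rightarrow> 'a \<Rightarrow> bool" where
  "hom_dominates x y \<longleftrightarrow> (\<forall>f. mono_hom_Rplus f \<longrightarrow> f x \<ge> f y)"

definition eps_dominates :: "'a::{comm_semiring_1,preorder} \<Rightarrow> 'a \<Rightarrow> 'a \<Rightarrow> bool" where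
  "eps_dominates u x y \<longleftrightarrow> (\<forall>\<epsilon>::rat. \<epsilon> > 0 \<longrightarrow> (\<exists>m. y \<le> x + eps_sum \<epsilon> u m))"

definition add_dominates :: "'a::{comm_semiring_1,preorder} \<Rightarrow> 'a \<Rightarrow> 'a \<Rightarrow> bool" where
  "add_dominates u x y \<longleftrightarrow> (\<forall>r::real. \<forall>\<epsilon>::rat. r \<ge> 0 \<longrightarrow> \<epsilon> > 0 \<longrightarrow>
     (\<exists>p. nonneg_qpoly p \<and> poly (map_poly of_rat p) r \<le> of_rat \<epsilon> \<and> y \<le> x + qpoly_eval p u))"

definition mult_dominates :: "'a::{comm_semiring_1,preorder} \<Rightarrow> 'a \<Rightarrow> 'a \<Rightarrow> bool" where
  "mult_dominates u x y \<longleftrightarrow> (\<forall>r::real. \<forall>\<epsilon>::rat. r \<ge> 0 \<longrightarrow> \<epsilon> > 0 \<longrightarrow>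
     (\<exists>p. nonneg_qpoly p \<and> poly (map_poly of_rat p) r \<le> 1 + of_rat \<epsilon> \<and> y \<le> qpoly_eval p u * x))"

lemma eps_dominates_imp_add_dominates:
  assumes "eps_dominates u x y"
  shows "add_dominates u x y"
  unfolding add_dominates_def
proof (intro allI impI)
  fix r :: real and \<epsilon> :: rat
  assume "0 \<le> r" "0 < \<epsilon>"
  then obtain \<delta> where \<delta>: "0 < \<delta>" "\<And>m. poly (map_poly of_rat (eps_poly \<delta> m)) r \<le> of_rat \<epsilon>"
    using small_eps_poly[of r 1 \<epsilon>] by (metis mult_1_right zero_le_one)
  then obtain m where "y \<le> x + eps_sum \<delta> u m"
    using assms unfolding eps_dominates_def by blast
  then show "\<exists>p. nonneg_qpoly p \<and> poly (map_poly of_rat p) r \<le> of_rat \<epsilon> \<and> y \<le> x + qpoly_eval p u"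
    using \<delta> nonneg_qpoly_eps_poly[of \<delta> m] by (auto simp: qpoly_eval_eps_poly)
qed

context
  assumes semifield: "is_semifield TYPE('a::{comm_semiring_1,preorder})"
    and char_zero: "char_zero_sr TYPE('a)"
begin

lemma add_dominates_imp_hom_dominates:
  fixes x y :: 'a
  assumes "add_dominates u x y"
  shows "hom_dominates x y"
  unfolding hom_dominates_def
proof (intro allI impI)
  fix f :: "'a \<Rightarrow> real"
  assume f: "mono_hom_Rplus f"
  show "f y \<le> f x"
  proof (rule ccontr)
    assume "\<not> f y \<le> f x"
    then obtain \<epsilon> :: rat where \<epsilon>: "(0::real) < of_rat \<epsilon>" "of_rat \<epsilon> < f y - f x"
      using of_rat_dense[of 0 "f y - f x"] by auto
    then obtain p where p: "nonneg_qpoly p" "poly (map_poly of_rat p) (f u) \<le> of_rat \<epsilon>"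
        "y \<le> x + qpoly_eval p u"
      using assms mono_hom_Rplus_nonneg[OF f] unfolding add_dominates_def by force
    then have "f y \<le> f x + poly (map_poly of_rat p) (f u)"
      using mono_hom_Rplus_mono[OF f p(3)]
      by (simp add: mono_hom_Rplus_add[OF f] mono_hom_Rplus_qpoly_eval[OF f semifield char_zero])
    then show False
      using p(2) \<epsilon>(2) by simp
  qed
qed

lemma mult_dominates_imp_hom_dominates:
  fixes x y :: 'a
  assumes "mult_dominates u x y"
  shows "hom_dominates x y"
  unfolding hom_dominates_def
proof (intro allI impI)
  fix f :: "'a \<Rightarrow> real"
  assume f: "mono_hom_Rplus f"
  have bound: "f y \<le> (1 + of_rat \<epsilon>) * f x" if "0 < \<epsilon>" for \<epsilon>
  proof -
    obtain p where p: "nonneg_qpoly p" "poly (map_poly of_rat p) (f u) \<le> 1 + of_rat \<epsilon>"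
        "y \<le> qpoly_eval p u * x"
      using assms mono_hom_Rplus_nonneg[OF f] \<open>0 < \<epsilon>\<close> unfolding mult_dominates_def by force
    then have "f y \<le> poly (map_poly of_rat p) (f u) * f x"
      using mono_hom_Rplus_mono[OF f p(3)]
      by (simp add: mono_hom_Rplus_mult[OF f] mono_hom_Rplus_qpoly_eval[OF f semifield char_zero])
    also have "\<dots> \<le> (1 + of_rat \<epsilon>) * f x"
      using p(2) mono_hom_Rplus_nonneg[OF f] by (rule mult_right_mono)
    finally show ?thesis .
  qed
  show "f y \<le> f x"
  proof (rule ccontr)
    assume "\<not> f y \<le> f x"
    moreover have "0 < f x"
      using bound[of 1] mono_hom_Rplus_nonneg[OF f, of x] \<open>\<not> f y \<le> f x\<close> by fastforce
    ultimately obtain \<epsilon> :: rat where \<epsilon>: "(0::real) < of_rat \<epsilon>" "of_rat \<epsilon> < (f y - f x) / f x"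
      using of_rat_dense[of 0 "(f y - f x) / f x"] by auto
    then have "(1 + of_rat \<epsilon>) * f x < f y"
      using \<open>0 < f x\<close> by (simp add: pos_less_divide_eq algebra_simps)
    then show False
      using bound[of \<epsilon>] \<epsilon>(1) by simp
  qed
qed

end

section \<open>Polynomially universal elements\<close>

locale poly_universal_semifield =
  fixes u :: "'a::{comm_semiring_1,preorder}"
  assumes semifield: "is_semifield TYPE('a)"
    and char_zero: "char_zero_sr TYPE('a)"
    and preordered: "preordered_sr TYPE('a)"
    and zero_le_one: "(0::'a) \<le> 1"
    and universal: "poly_universal u"
begin

declare semifield [simp] char_zero [simp]

lemma le_compatible: "compatible_preorder {(a::'a, b). a \<le> b}"
  using compatible_preorder_le[OF preordered] .

lemma zero_one_le: "(0, 1) \<in> {(a::'a, b). a \<le> b}"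
  using zero_le_one by simp

lemma add_le_add: "(a::'a) \<le> b \<Longrightarrow> c \<le> d \<Longrightarrow> a + c \<le> b + d"
  using compatible_preorder_add[OF le_compatible] by blast

lemma mult_le_mult: "(a::'a) \<le> b \<Longrightarrow> c \<le> d \<Longrightarrow> a * c \<le> b * d"
  using compatible_preorder_mult[OF le_compatible] by blast

lemma le_add_self: "(a::'a) \<le> a + b"
  using compatible_preorder_le_add[OF le_compatible zero_one_le] by simp

lemma zero_le: "(0::'a) \<le> a"
  using compatible_preorder_zero_le[OF le_compatible zero_one_le] by simp

lemma le_of_nat_mult_power:
  assumes "(a::'a) \<noteq> 0"
  obtains N d0 where "\<And>D. d0 \<le> D \<Longrightarrow> a \<le> of_nat N * u ^ D"
proof -
  obtain P :: "nat poly" where P: "a \<le> npoly_eval P u"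
    using universal assms unfolding poly_universal_def by auto
  have "a \<le> of_nat (\<Sum>i\<le>degree P. coeff P i) * u ^ D" if "degree P \<le> D" for D
  proof -
    have "(1, u) \<in> {(a::'a, b). a \<le> b}"
      using universal unfolding poly_universal_def by simp
    then have term_le: "(of_nat (coeff P i) * u ^ i, of_nat (coeff P i) * u ^ D) \<in> {(a, b). a \<le> b}"
      if "i \<le> D" for i
      using that compatible_preorder_mult_left[OF le_compatible]
        compatible_preorder_power_le_power[OF le_compatible zero_one_le] by blast
    have "a \<le> (\<Sum>i\<le>degree P. of_nat (coeff P i) * u ^ i)"
      using P by (simp add: npoly_eval_def poly_map_poly_eq_sum_upto[OF order_refl])
    also have "\<dots> \<le> (\<Sum>i\<le>degree P. of_nat (coeff P i) * u ^ D)"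
      using compatible_preorder_sum[OF le_compatible, of "{..degree P}"] term_le \<open>degree P \<le> D\<close>
      by auto
    finally show ?thesis
      by (simp add: sum_distrib_right)
  qed
  then show ?thesis
    using that by blast
qed

lemma eps_dominates_imp_mult_dominates:
  assumes "x \<noteq> 0" "eps_dominates u x y"
  shows "mult_dominates u x y"
  unfolding mult_dominates_def
proof (intro allI impI)
  fix r :: real and \<epsilon> :: rat
  assume "0 \<le> r" "0 < \<epsilon>"
  obtain P :: "nat poly" where P: "1 \<le> npoly_eval P u * x"
    using universal assms(1) unfolding poly_universal_def by auto
  define K where "K = poly (map_poly (of_rat :: rat \<Rightarrow> real) (map_poly of_nat P)) r"
  have "0 \<le> K"
    unfolding K_def using \<open>0 \<le> r\<close> by (intro poly_of_rat_nonneg nonneg_qpoly_of_nat_poly)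
  then obtain \<delta> where \<delta>: "0 < \<delta>" "\<And>m. poly (map_poly of_rat (eps_poly \<delta> m)) r * K \<le> of_rat \<epsilon>"
    using small_eps_poly \<open>0 \<le> r\<close> \<open>0 < \<epsilon>\<close> by metis
  then obtain m where m: "y \<le> x + eps_sum \<delta> u m"
    using assms(2) unfolding eps_dominates_def by blast
  define p where "p = 1 + eps_poly \<delta> m * map_poly of_nat P"
  have nonneg: "nonneg_qpoly (eps_poly \<delta> m)" "nonneg_qpoly (map_poly of_nat P)"
    using \<delta>(1) by (simp_all add: nonneg_qpoly_eps_poly nonneg_qpoly_of_nat_poly)
  show "\<exists>p. nonneg_qpoly p \<and> poly (map_poly of_rat p) r \<le> 1 + of_rat \<epsilon> \<and> y \<le> qpoly_eval p u * x"
  proof (intro exI conjI)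
    show "nonneg_qpoly p"
      unfolding p_def using nonneg by (intro nonneg_qpoly_add nonneg_qpoly_mult nonneg_qpoly_1)
    show "poly (map_poly of_rat p) r \<le> 1 + of_rat \<epsilon>"
      using \<delta>(2)[of m] unfolding p_def K_def by (simp add: map_poly_of_rat_add map_poly_of_rat_mult)
    have "qpoly_eval p u = 1 + eps_sum \<delta> u m * npoly_eval P u"
      unfolding p_def using nonneg
      by (simp add: qpoly_eval_add qpoly_eval_mult qpoly_eval_1 qpoly_eval_of_nat_poly
          qpoly_eval_eps_poly nonneg_qpoly_1 nonneg_qpoly_mult)
    moreover have "x + eps_sum \<delta> u m \<le> x + eps_sum \<delta> u m * (npoly_eval P u * x)"
      using add_le_add[OF order_refl mult_le_mult[OF order_refl P]] by simp
    ultimately show "y \<le> qpoly_eval p u * x"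
      using m by (auto simp: algebra_simps intro: order_trans)
  qed
qed

lemma le_add_of_nnrat_inverse_mult:
  fixes y w b :: 'a
  assumes "y + w \<le> b + w" "0 < n"
  shows "y \<le> b + of_nnrat (1 / of_nat n) * w"
proof -
  have "of_nat k * y + w \<le> of_nat k * b + w" for k
  proof (induction k)
    case (Suc k)
    have "of_nat (Suc k) * y + w = y + (of_nat k * y + w)"
      by (simp add: algebra_simps)
    also have "\<dots> \<le> y + (of_nat k * b + w)"
      using add_le_add[OF order_refl Suc] .
    also have "\<dots> = of_nat k * b + (y + w)"
      by (simp add: algebra_simps)
    also have "\<dots> \<le> of_nat k * b + (b + w)"
      using add_le_add[OF order_refl assms(1)] .
    finally show ?case
      by (simp add: algebra_simps)
  qed simp
  then have "of_nnrat (1 / of_nat n) * (of_nat n * y + w) \<le> of_nnrat (1 / of_nat n) * (of_nat n * b + w)"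
    using mult_le_mult[OF order_refl] by blast
  moreover have "of_nnrat (1 / of_nat n) * (of_nat n :: 'a) = 1"
    using assms(2) of_nnrat_mult[OF semifield char_zero, of "1 / of_nat n" "of_nat n"] by simp
  ultimately have "y + of_nnrat (1 / of_nat n) * w \<le> b + of_nnrat (1 / of_nat n) * w"
    by (simp add: distrib_left mult.assoc[symmetric])
  then show ?thesis
    using le_add_self order_trans by blast
qed

end

section \<open>A separating monotone homomorphism\<close>

locale eps_separated = poly_universal_semifield +
  fixes x y :: "'a::{comm_semiring_1,preorder}" and \<epsilon> :: rat
  assumes eps_pos: "0 < \<epsilon>"
    and not_le_eps_sum: "\<And>m. \<not> y \<le> x + eps_sum \<epsilon> u m"
begin

lemma y_neq_0: "y \<noteq> 0"
  using not_le_eps_sum[of 0] zero_le by auto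

text \<open>Since every \<open>w \<noteq> 0\<close> is bounded by \<open>N u\<^sup>D\<close>, an added \<open>w\<close> can be scaled down by
  \<open>1 / n\<close> and absorbed into a further term of the series.\<close>

lemma not_le_eps_sum_add: "\<not> y + w \<le> x + eps_sum \<epsilon> u m + w"
proof
  assume le: "y + w \<le> x + eps_sum \<epsilon> u m + w"
  show False
  proof (cases "w = 0")
    case True
    then show False
      using le not_le_eps_sum by simp
  next
    case False
    then obtain N d0 where N: "\<And>D. d0 \<le> D \<Longrightarrow> w \<le> of_nat N * u ^ D"
      using le_of_nat_mult_power by metis
    define D where "D = m + d0 + 1"
    obtain n :: nat where n: "of_nat N < of_nat n * \<epsilon> ^ (D + 1)"
      using ex_less_of_nat_mult[of "\<epsilon> ^ (D + 1)"] eps_pos by auto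
    then have "0 < n"
      by (metis gr0I mult_not_zero not_less_zero of_nat_0 of_nat_less_imp_less)
    with n have small: "of_nat N / of_nat n \<le> \<epsilon> ^ (D + 1)"
      by (simp add: pos_divide_le_eq mult.commute)
    have "y \<le> x + eps_sum \<epsilon> u m + of_nnrat (1 / of_nat n) * w"
      using le \<open>0 < n\<close> by (rule le_add_of_nnrat_inverse_mult)
    also have "\<dots> \<le> x + eps_sum \<epsilon> u m + of_nnrat (1 / of_nat n) * (of_nat N * u ^ D)"
      using N[of D] by (intro add_le_add mult_le_mult order_refl) (simp add: D_def)
    also have "\<dots> = x + eps_sum \<epsilon> u m + of_nnrat (of_nat N / of_nat n) * u ^ D"
      using of_nnrat_mult[OF semifield char_zero, of "1 / of_nat n" "of_nat N"]
      by (simp add: mult.assoc)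
    also have "\<dots> \<le> x + (eps_sum \<epsilon> u m + of_nnrat (\<epsilon> ^ (D + 1)) * u ^ D)"
      using compatible_preorder_of_nnrat_mono[OF le_compatible zero_one_le semifield char_zero _ small]
      by (simp add: add.assoc add_le_add mult_le_mult)
    also have "\<dots> \<le> x + eps_sum \<epsilon> u D"
      using compatible_preorder_eps_sum_add_term[OF le_compatible zero_one_le, of m D]
      by (simp add: D_def add_le_add)
    finally show False
      using not_le_eps_sum by blast
  qed
qed

text \<open>The summand \<open>w\<close> makes the family closed under cancellation, so that its maximal
  elements are cancellative.\<close>

definition separating :: "('a \<times> 'a) set set" where
  "separating = {R. compatible_preorder R \<and> {(a, b). a \<le> b} \<subseteq> R
     \<and> (\<forall>m w. (y + w, x + eps_sum \<epsilon> u m + w) \<notin> R)}"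

lemma le_separating: "{(a, b). a \<le> b} \<in> separating"
  unfolding separating_def using le_compatible not_le_eps_sum_add by auto

lemma maximal_separating_exists:
  obtains M where "M \<in> separating" "\<And>X. X \<in> separating \<Longrightarrow> M \<subseteq> X \<Longrightarrow> X = M"
proof -
  have "\<forall>C\<in>chains separating. \<exists>U\<in>separating. \<forall>X\<in>C. X \<subseteq> U"
  proof (intro ballI)
    fix C assume C: "C \<in> chains separating"
    show "\<exists>U\<in>separating. \<forall>X\<in>C. X \<subseteq> U"
    proof (cases "C = {}")
      case True
      then show ?thesis
        using le_separating by blast
    next
      case False
      have "C \<subseteq> separating" "chain\<^sub>\<subseteq> C"
        using C unfolding chains_def by auto
      then have "compatible_preorder (\<Union>C)"
        using False by (intro compatible_preorder_chain_Union) (auto simp: separating_def)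
      moreover have "{(a, b). a \<le> b} \<subseteq> \<Union>C"
        using False \<open>C \<subseteq> separating\<close> unfolding separating_def by blast
      moreover have "(y + w, x + eps_sum \<epsilon> u m + w) \<notin> \<Union>C" for m w
        using \<open>C \<subseteq> separating\<close> unfolding separating_def by blast
      ultimately show ?thesis
        unfolding separating_def by blast
    qed
  qed
  then obtain M where "M \<in> separating" "\<forall>X\<in>separating. M \<subseteq> X \<longrightarrow> X = M"
    by (rule Zorn_Lemma2[THEN bexE])
  then show ?thesis
    using that by blast
qed

end

locale maximal_separating = eps_separated +
  fixes M :: "('a \<times> 'a) set"
  assumes M_separating: "M \<in> separating"
    and M_maximal: "\<And>X. X \<in> separating \<Longrightarrow> M \<subseteq> X \<Longrightarrow> X = M"
begin

lemma M_compatible: "compatible_preorder M"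
  using M_separating unfolding separating_def by blast

lemma le_imp_M: "a \<le> b \<Longrightarrow> (a, b) \<in> M"
  using M_separating unfolding separating_def by blast

lemma M_trans [trans]: "(a, b) \<in> M \<Longrightarrow> (b, c) \<in> M \<Longrightarrow> (a, c) \<in> M"
  using compatible_preorder_trans[OF M_compatible] .

lemma M_not_le_eps_sum_add: "(y + w, x + eps_sum \<epsilon> u m + w) \<notin> M"
  using M_separating unfolding separating_def by blast

lemma M_not_le_eps_sum: "(y, x + eps_sum \<epsilon> u m) \<notin> M"
  using M_not_le_eps_sum_add[of 0] by simp

lemma M_zero_one: "(0, 1) \<in> M"
  using le_imp_M[OF zero_le_one] .

lemma M_zero_le: "(0, a) \<in> M"
  using le_imp_M zero_le by blast

lemma M_eps_sum_mono: "k \<le> m \<Longrightarrow> (x + eps_sum \<epsilon> u k, x + eps_sum \<epsilon> u m) \<in> M"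
  using compatible_preorder_add_left[OF M_compatible]
    compatible_preorder_eps_sum_mono[OF M_compatible M_zero_one] by blast

lemma M_cancel:
  assumes "(a + w, b + w) \<in> M"
  shows "(a, b) \<in> M"
proof -
  define M' where "M' = {(a, b). \<exists>w. (a + w, b + w) \<in> M}"
  have "M \<subseteq> M'"
    unfolding M'_def by (auto intro!: exI[of _ 0])
  moreover have "M' \<in> separating"
  proof -
    have "(y + w, x + eps_sum \<epsilon> u m + w) \<notin> M'" for m w
      using M_not_le_eps_sum_add unfolding M'_def by (simp add: add.assoc)
    then show ?thesis
      using compatible_preorder_cancel_closure[OF M_compatible] \<open>M \<subseteq> M'\<close> le_imp_M
      unfolding separating_def M'_def by blast
  qed
  ultimately have "M' = M"
    using M_maximal by blast
  then show ?thesis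
    using assms unfolding M'_def by blast
qed

lemma M_extend:
  assumes "(a, b) \<notin> M"
  obtains m z where "(y + b * z, x + eps_sum \<epsilon> u m + a * z) \<in> M"
proof -
  define M' where "M' = {(c, d). \<exists>z. (c + b * z, d + a * z) \<in> M}"
  have "M \<subseteq> M'"
    unfolding M'_def by (auto intro!: exI[of _ 0])
  moreover have "(a, b) \<in> M'"
    unfolding M'_def using compatible_preorder_refl[OF M_compatible, of "a + b"]
    by (auto intro!: exI[of _ 1] simp: add.commute)
  ultimately have "M' \<notin> separating"
    using M_maximal assms by blast
  then obtain m w where "(y + w, x + eps_sum \<epsilon> u m + w) \<in> M'"
    using compatible_preorder_extend[OF M_compatible] \<open>M \<subseteq> M'\<close> le_imp_M
    unfolding separating_def M'_def by blast
  then obtain z where "(y + b * z + w, x + eps_sum \<epsilon> u m + a * z + w) \<in> M"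
    unfolding M'_def by (auto simp: ac_simps)
  then show ?thesis
    using M_cancel that by blast
qed

lemma M_not_one_le_zero: "(1, 0) \<notin> M"
proof
  assume "(1, 0) \<in> M"
  then have "(y, 0) \<in> M"
    using compatible_preorder_mult_left[OF M_compatible, of 1 0 y] by simp
  then show False
    using M_not_le_eps_sum[of 0] M_trans M_zero_le by blast
qed

lemma M_divide: "(a * t, b * t) \<in> M \<Longrightarrow> t \<noteq> 0 \<Longrightarrow> (a, b) \<in> M"
  using compatible_preorder_mult_right[OF M_compatible, of "a * t" "b * t" "sf_inv t"]
  by (simp add: mult.assoc sf_mult_inv)

lemma add_eq_0_imp_eq_0:
  assumes "a + b = (0::'a)"
  shows "a = 0"
proof (rule ccontr)
  assume "a \<noteq> 0"
  then have "1 + b * sf_inv a = 0"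
    using assms by (metis distrib_right mult_zero_left sf_mult_inv semifield char_zero)
  then show False
    using compatible_preorder_add_left[OF M_compatible M_zero_le, of 1 "b * sf_inv a"]
      M_not_one_le_zero by simp
qed

text \<open>If neither \<open>(a, b)\<close> nor \<open>(b, a)\<close> were in \<open>M\<close>, maximality would put
  \<open>(y + b z, B + a z)\<close> and \<open>(y + a z', B + b z')\<close> into \<open>M\<close>; multiplying by \<open>z'\<close> and \<open>z\<close>,
  adding and cancelling \<open>(a + b) z z'\<close> leaves \<open>(y (z + z'), B (z + z')) \<in> M\<close>.\<close>

lemma M_total: "(a, b) \<in> M \<or> (b, a) \<in> M"
proof (rule ccontr)
  assume "\<not> ((a, b) \<in> M \<or> (b, a) \<in> M)"
  then obtain m z m' z' where
    1: "(y + b * z, x + eps_sum \<epsilon> u m + a * z) \<in> M" and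
    2: "(y + a * z', x + eps_sum \<epsilon> u m' + b * z') \<in> M"
    using M_extend by metis
  define B where "B = x + eps_sum \<epsilon> u (max m m')"
  have "(x + eps_sum \<epsilon> u m + c, B + c) \<in> M" "(x + eps_sum \<epsilon> u m' + c, B + c) \<in> M" for c
    unfolding B_def using M_eps_sum_mono compatible_preorder_add_right[OF M_compatible] by simp_all
  then have 1: "(y + b * z, B + a * z) \<in> M" and 2: "(y + a * z', B + b * z') \<in> M"
    using 1 2 M_trans by blast+
  have not_yB: "(y, B) \<notin> M"
    unfolding B_def by (rule M_not_le_eps_sum)
  show False
  proof (cases "z + z' = 0")
    case True
    then show False
      using 1 not_yB add_eq_0_imp_eq_0[of z z'] by simp
  next
    case False
    have "((y + b * z) * z' + (y + a * z') * z, (B + a * z) * z' + (B + b * z') * z) \<in> M"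
      using compatible_preorder_add[OF M_compatible] compatible_preorder_mult_right[OF M_compatible]
        1 2 by blast
    then have "(y * (z + z') + (a + b) * z * z', B * (z + z') + (a + b) * z * z') \<in> M"
      by (simp add: algebra_simps)
    then have "(y * (z + z'), B * (z + z')) \<in> M"
      by (rule M_cancel)
    then show False
      using M_divide False not_yB by blast
  qed
qed

lemma M_of_nnrat_imp_le:
  assumes "0 \<le> q" "0 \<le> q'" "(of_nnrat q, of_nnrat q') \<in> M"
  shows "q \<le> q'"
proof (rule ccontr)
  assume "\<not> q \<le> q'"
  then have "0 < q - q'"
    by simp
  have "(of_nnrat q :: 'a) = of_nnrat (q - q') + of_nnrat q'"
    using of_nnrat_add[OF semifield char_zero, of "q - q'" q'] \<open>0 < q - q'\<close> assms(2) by simp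
  then have "(of_nnrat (q - q') * 1, of_nnrat (q - q') * 0) \<in> M"
    using assms(3) M_cancel[of "of_nnrat (q - q')" "of_nnrat q'" 0] by simp
  then show False
    using M_divide[OF _ of_nnrat_neq_0[OF semifield char_zero \<open>0 < q - q'\<close>]] M_not_one_le_zero
    by (simp add: mult.commute)
qed

text \<open>If \<open>u\<close> exceeded every rational in \<open>M\<close>, a single term \<open>\<epsilon>\<^sup>d\<^sup>+\<^sup>2 u\<^sup>d\<^sup>+\<^sup>1\<close> of the series
  would already dominate \<open>y \<le> N u\<^sup>d\<close>.\<close>

lemma M_u_bounded:
  obtains q where "0 \<le> q" "(u, of_nnrat q) \<in> M"
proof (rule ccontr)
  assume unbounded: "\<not> thesis"
  obtain N d where N: "y \<le> of_nat N * u ^ d"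
    using le_of_nat_mult_power[OF y_neq_0] by (metis order_refl)
  define q where "q = of_nat N / \<epsilon> ^ (d + 2)"
  have "0 \<le> q"
    unfolding q_def using eps_pos by simp
  then have "(of_nnrat q, u) \<in> M"
    using unbounded that M_total by blast
  define t where "t = of_nnrat (\<epsilon> ^ (d + 1 + 1)) * u ^ (d + 1)"
  have "(y, of_nat N * u ^ d) \<in> M"
    using le_imp_M[OF N] .
  also have "of_nat N * u ^ d = of_nnrat (\<epsilon> ^ (d + 2)) * (of_nnrat q * u ^ d)"
    using of_nnrat_mult[OF semifield char_zero, of "\<epsilon> ^ (d + 2)" q] \<open>0 \<le> q\<close> eps_pos
    by (simp add: q_def mult.assoc)
  also have "(of_nnrat (\<epsilon> ^ (d + 2)) * (of_nnrat q * u ^ d), t) \<in> M"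
    using \<open>(of_nnrat q, u) \<in> M\<close> compatible_preorder_mult_left[OF M_compatible]
      compatible_preorder_mult_right[OF M_compatible] by (simp add: t_def mult.assoc)
  also have "(t, eps_sum \<epsilon> u d + t) \<in> M"
    by (subst add.commute) (rule compatible_preorder_le_add[OF M_compatible M_zero_one])
  also have "(eps_sum \<epsilon> u d + t, eps_sum \<epsilon> u (d + 1)) \<in> M"
    unfolding t_def by (rule compatible_preorder_eps_sum_add_term[OF M_compatible M_zero_one]) simp
  also have "(eps_sum \<epsilon> u (d + 1), x + eps_sum \<epsilon> u (d + 1)) \<in> M"
    by (subst add.commute) (rule compatible_preorder_le_add[OF M_compatible M_zero_one])
  finally show False
    using M_not_le_eps_sum by blast
qed

lemma M_archimedean:
  obtains q where "0 \<le> q" "(a, of_nnrat q) \<in> M"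
proof (cases "a = 0")
  case True
  then show ?thesis
    using that[of 0] compatible_preorder_refl[OF M_compatible] by simp
next
  case False
  obtain N d where N: "a \<le> of_nat N * u ^ d"
    using le_of_nat_mult_power[OF False] by (metis order_refl)
  obtain q where q: "0 \<le> q" "(u, of_nnrat q) \<in> M"
    by (rule M_u_bounded)
  have "(of_nat N * u ^ d, of_nat N * of_nnrat q ^ d) \<in> M"
    using compatible_preorder_mult_left[OF M_compatible compatible_preorder_power[OF M_compatible q(2)]] .
  also have "of_nat N * of_nnrat q ^ d = (of_nnrat (of_nat N * q ^ d) :: 'a)"
    using q(1) by (simp add: of_nnrat_mult of_nnrat_power)
  finally show ?thesis
    using that[of "of_nat N * q ^ d"] q(1) le_imp_M[OF N] M_trans
    by simp
qed

definition phi :: "'a \<Rightarrow> real" where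
  "phi a = Inf {of_rat q | q. 0 \<le> q \<and> (a, of_nnrat q) \<in> M}"

lemma phi_le: "0 \<le> q \<Longrightarrow> (a, of_nnrat q) \<in> M \<Longrightarrow> phi a \<le> of_rat q"
  unfolding phi_def by (rule cInf_lower) (auto intro!: bdd_belowI[of _ 0])

lemma le_phiI:
  assumes "\<And>q. 0 \<le> q \<Longrightarrow> (a, of_nnrat q) \<in> M \<Longrightarrow> c \<le> of_rat q"
  shows "c \<le> phi a"
proof -
  obtain q where "0 \<le> q" "(a, of_nnrat q) \<in> M"
    by (rule M_archimedean)
  then show ?thesis
    unfolding phi_def using assms by (intro cInf_greatest) auto
qed

lemma phi_nonneg: "0 \<le> phi a"
  by (rule le_phiI) simp

lemma le_phi:
  assumes "0 \<le> q" "(of_nnrat q, a) \<in> M"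
  shows "of_rat q \<le> phi a"
proof (rule le_phiI)
  fix q' assume "0 \<le> q'" "(a, of_nnrat q') \<in> M"
  then have "q \<le> q'"
    using assms M_trans M_of_nnrat_imp_le by blast
  then show "of_rat q \<le> (of_rat q' :: real)"
    by (simp add: of_rat_less_eq)
qed

text \<open>Totality of \<open>M\<close> makes the rational lower bounds of \<open>a\<close> approximate \<open>phi a\<close> as well.\<close>

lemma phi_leI:
  assumes "\<And>q. 0 \<le> q \<Longrightarrow> (of_nnrat q, a) \<in> M \<Longrightarrow> of_rat q \<le> c"
  shows "phi a \<le> c"
proof (rule ccontr)
  assume "\<not> phi a \<le> c"
  moreover have "0 \<le> c"
    using assms[of 0] M_zero_le by simp
  ultimately obtain q where q: "c < of_rat q" "of_rat q < phi a"
    using of_rat_dense by (metis not_le)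
  then have "0 \<le> q"
    using \<open>0 \<le> c\<close> by (metis of_rat_less_eq of_rat_0 order.strict_iff_order order_trans)
  then have "(a, of_nnrat q) \<notin> M"
    using phi_le q(2) by force
  then show False
    using assms[OF \<open>0 \<le> q\<close>] M_total q(1) by fastforce
qed

lemma phi_of_nnrat: "0 \<le> q \<Longrightarrow> phi (of_nnrat q) = of_rat q"
  by (meson antisym le_phi phi_le compatible_preorder_refl[OF M_compatible])

lemma phi_mono: "(a, b) \<in> M \<Longrightarrow> phi a \<le> phi b"
  by (rule le_phiI) (use phi_le M_trans in blast)

lemma phi_add: "phi (a + b) = phi a + phi b"
proof (rule antisym)
  have "phi (a + b) \<le> of_rat q + of_rat q'"
    if "0 \<le> q" "(a, of_nnrat q) \<in> M" "0 \<le> q'" "(b, of_nnrat q') \<in> M" for q q'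
    using phi_le[of "q + q'" "a + b"] compatible_preorder_add[OF M_compatible that(2,4)] that
    by (simp add: of_nnrat_add of_rat_add)
  then have "phi (a + b) - of_rat q' \<le> phi a"
    if "0 \<le> q'" "(b, of_nnrat q') \<in> M" for q'
    using that by (intro le_phiI) force
  then have "phi (a + b) - phi a \<le> phi b"
    by (intro le_phiI) force
  then show "phi (a + b) \<le> phi a + phi b"
    by simp
next
  have "of_rat q + of_rat q' \<le> phi (a + b)"
    if "0 \<le> q" "(of_nnrat q, a) \<in> M" "0 \<le> q'" "(of_nnrat q', b) \<in> M" for q q'
    using le_phi[of "q + q'" "a + b"] compatible_preorder_add[OF M_compatible that(2,4)] that
    by (simp add: of_nnrat_add of_rat_add)
  then have "phi a \<le> phi (a + b) - of_rat q'"
    if "0 \<le> q'" "(of_nnrat q', b) \<in> M" for q'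
    using that by (intro phi_leI) force
  then have "phi b \<le> phi (a + b) - phi a"
    by (intro phi_leI) force
  then show "phi a + phi b \<le> phi (a + b)"
    by simp
qed

lemma phi_mult_le: "phi (a * b) \<le> phi a * phi b"
proof -
  have bound: "phi (a * b) \<le> of_rat q * of_rat q'"
    if "0 \<le> q" "(a, of_nnrat q) \<in> M" "0 \<le> q'" "(b, of_nnrat q') \<in> M" for q q'
    using phi_le[of "q * q'" "a * b"] compatible_preorder_mult[OF M_compatible that(2,4)] that
    by (simp add: of_nnrat_mult of_rat_mult)
  have bound_a: "phi (a * b) \<le> phi a * of_rat q'" if q': "0 \<le> q'" "(b, of_nnrat q') \<in> M" for q'
  proof (cases "q' = 0")
    case True
    obtain q where "0 \<le> q" "(a, of_nnrat q) \<in> M"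
      by (rule M_archimedean)
    then show ?thesis
      using bound[OF _ _ q'] True by simp
  next
    case False
    then have "0 < (of_rat q' :: real)"
      using q'(1) by simp
    moreover have "phi (a * b) / of_rat q' \<le> phi a"
      using bound[OF _ _ q'] \<open>0 < of_rat q'\<close> by (intro le_phiI) (simp add: divide_le_eq)
    ultimately show ?thesis
      by (simp add: divide_le_eq)
  qed
  show ?thesis
  proof (cases "phi a = 0")
    case True
    obtain q' where "0 \<le> q'" "(b, of_nnrat q') \<in> M"
      by (rule M_archimedean)
    then show ?thesis
      using bound_a True by simp
  next
    case False
    then have "0 < phi a"
      using phi_nonneg[of a] by simp
    moreover have "phi (a * b) / phi a \<le> phi b"
      using bound_a \<open>0 < phi a\<close> by (intro le_phiI) (simp add: divide_le_eq mult.commute)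
    ultimately show ?thesis
      by (simp add: divide_le_eq mult.commute)
  qed
qed

lemma phi_mult_ge: "phi a * phi b \<le> phi (a * b)"
proof -
  have bound: "of_rat q * of_rat q' \<le> phi (a * b)"
    if "0 \<le> q" "(of_nnrat q, a) \<in> M" "0 \<le> q'" "(of_nnrat q', b) \<in> M" for q q'
    using le_phi[of "q * q'" "a * b"] compatible_preorder_mult[OF M_compatible that(2,4)] that
    by (simp add: of_nnrat_mult of_rat_mult)
  have bound_a: "phi a * of_rat q' \<le> phi (a * b)" if q': "0 \<le> q'" "(of_nnrat q', b) \<in> M" for q'
  proof (cases "q' = 0")
    case True
    then show ?thesis
      using phi_nonneg by simp
  next
    case False
    then have "0 < (of_rat q' :: real)"
      using q'(1) by simp
    moreover have "phi a \<le> phi (a * b) / of_rat q'"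
      using bound[OF _ _ q'] \<open>0 < of_rat q'\<close> by (intro phi_leI) (simp add: le_divide_eq)
    ultimately show ?thesis
      by (simp add: le_divide_eq)
  qed
  show ?thesis
  proof (cases "phi a = 0")
    case True
    then show ?thesis
      using phi_nonneg by simp
  next
    case False
    then have "0 < phi a"
      using phi_nonneg[of a] by simp
    moreover have "phi b \<le> phi (a * b) / phi a"
      using bound_a \<open>0 < phi a\<close> by (intro phi_leI) (simp add: le_divide_eq mult.commute)
    ultimately show ?thesis
      by (simp add: le_divide_eq mult.commute)
  qed
qed

lemma mono_hom_Rplus_phi: "mono_hom_Rplus phi"
  unfolding mono_hom_Rplus_def
  using phi_nonneg phi_add phi_mult_le phi_mult_ge phi_of_nnrat[of 0] phi_of_nnrat[of 1]
    phi_mono le_imp_M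
  by (auto intro: antisym)

lemma phi_less: "phi x < phi y"
proof -
  have "(x + eps_sum \<epsilon> u 0, y) \<in> M"
    using M_not_le_eps_sum M_total by blast
  then have "phi (x + of_nnrat \<epsilon>) \<le> phi y"
    by (simp add: eps_sum_eq_sum phi_mono)
  then have "phi x + of_rat \<epsilon> \<le> phi y"
    using eps_pos by (simp add: phi_add phi_of_nnrat)
  moreover have "(0::real) < of_rat \<epsilon>"
    using eps_pos by simp
  ultimately show ?thesis
    by linarith
qed

end

lemma (in eps_separated) separating_mono_hom_exists: "\<exists>f. mono_hom_Rplus f \<and> f x < f y"
proof -
  obtain M where "M \<in> separating" "\<And>X. X \<in> separating \<Longrightarrow> M \<subseteq> X \<Longrightarrow> X = M"
    using maximal_separating_exists by metis
  then interpret maximal_separating u x y \<epsilon> M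
    by unfold_locales
  show ?thesis
    using mono_hom_Rplus_phi phi_less by blast
qed

lemma (in poly_universal_semifield) hom_dominates_imp_eps_dominates:
  assumes "hom_dominates x y"
  shows "eps_dominates u x y"
  unfolding eps_dominates_def
proof (intro allI impI, rule ccontr)
  fix \<epsilon> :: rat
  assume "0 < \<epsilon>" "\<nexists>m. y \<le> x + eps_sum \<epsilon> u m"
  then interpret eps_separated u x y \<epsilon>
    by unfold_locales auto
  show False
    using separating_mono_hom_exists assms unfolding hom_dominates_def by force
qed

theorem theorem3p1:
  fixes u x y :: "'a::{comm_semiring_1,preorder}"
  assumes "is_semifield TYPE('a)"
    and "char_zero_sr TYPE('a)"
    and "preordered_sr TYPE('a)"
    and "(0::'a) \<le> 1"
    and "poly_universal u"
    and "x \<noteq> 0" and "y \<noteq> 0"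
  shows "((\<forall>f. mono_hom_Rplus f \<longrightarrow> f x \<ge> f y) \<longleftrightarrow>
          (\<forall>\<epsilon>::rat. \<epsilon> > 0 \<longrightarrow> (\<exists>m::nat. y \<le> x + (\<Sum>j\<le>m. qscale (\<epsilon> ^ (j + 1)) (u ^ j)))))
       \<and> ((\<forall>\<epsilon>::rat. \<epsilon> > 0 \<longrightarrow> (\<exists>m::nat. y \<le> x + (\<Sum>j\<le>m. qscale (\<epsilon> ^ (j + 1)) (u ^ j)))) \<longleftrightarrow>
          (\<forall>r::real. \<forall>\<epsilon>::rat. r \<ge> 0 \<longrightarrow> \<epsilon> > 0 \<longrightarrow>
             (\<exists>p::rat poly. nonneg_qpoly p \<and> poly (map_poly of_rat p) r \<le> of_rat \<epsilon>
                \<and> y \<le> x + qpoly_eval p u)))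
       \<and> ((\<forall>r::real. \<forall>\<epsilon>::rat. r \<ge> 0 \<longrightarrow> \<epsilon> > 0 \<longrightarrow>
             (\<exists>p::rat poly. nonneg_qpoly p \<and> poly (map_poly of_rat p) r \<le> of_rat \<epsilon>
                \<and> y \<le> x + qpoly_eval p u)) \<longleftrightarrow>
          (\<forall>r::real. \<forall>\<epsilon>::rat. r \<ge> 0 \<longrightarrow> \<epsilon> > 0 \<longrightarrow>
             (\<exists>p::rat poly. nonneg_qpoly p \<and> poly (map_poly of_rat p) r \<le> 1 + of_rat \<epsilon>
                \<and> y \<le> qpoly_eval p u * x)))"
proof -
  interpret poly_universal_semifield u
    using assms(1-5) by unfold_locales
  have hom_eps: "hom_dominates x y \<longleftrightarrow> eps_dominates u x y"
    using hom_dominates_imp_eps_dominates eps_dominates_imp_add_dominates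
      add_dominates_imp_hom_dominates[OF semifield char_zero] by blast
  have eps_add: "eps_dominates u x y \<longleftrightarrow> add_dominates u x y"
    using hom_eps eps_dominates_imp_add_dominates
      add_dominates_imp_hom_dominates[OF semifield char_zero] by blast
  have add_mult: "add_dominates u x y \<longleftrightarrow> mult_dominates u x y"
    using eps_add hom_eps eps_dominates_imp_mult_dominates[OF \<open>x \<noteq> 0\<close>]
      mult_dominates_imp_hom_dominates[OF semifield char_zero] by blast
  from hom_eps eps_add add_mult show ?thesis
    unfolding hom_dominates_def eps_dominates_def add_dominates_def mult_dominates_def eps_sum_def
    by blast
qed

end
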